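(* Let $\mathfrak{g}$ be a Lie algebra with two stratifications $$V_1\oplus\dots\oplus V_s=\mathfrak{g}=W_1\oplus\dots\oplus W_t.$$ Then $s=t$ and there exists a Lie algebra automorphism $A:\mathfrak{g}\to\mathfrak{g}$ such that $A(V_i)=W_i$ for all $i\in\{1,\dots,s\}$.
   Context: All Lie algebras are finite-dimensional over $\mathbb R$. For subspaces $V,W$ of a Lie algebra, $[V,W]:=\operatorname{span}\{[X,Y]: X\in V, Y\in W\}$. A stratification of a Lie algebra $\mathfrak{g}$ is a direct-sum decomposition $\mathfrak{g}=V_1\oplus\dots\oplus V_s$ for some integer $s\ge1$ with $V_s\neq\{0\}$ and $[V_1,V_j]=V_{j+1}$ for all $j\in\{1,\dots,s\}$, where $V_{s+1}:=\{0\}$. *)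

theory Defs
  imports "HOL-Analysis.Analysis"
begin

definition lie_algebra :: "('g::real_vector \<Rightarrow> 'g \<Rightarrow> 'g) \<Rightarrow> bool" where
  "lie_algebra br \<longleftrightarrow>
     (\<forall>x. linear (br x)) \<and> (\<forall>y. linear (\<lambda>x. br x y)) \<and>
     (\<forall>x. br x x = 0) \<and>
     (\<forall>x y z. br x (br y z) + br y (br z x) + br z (br x y) = 0)"

definition fin_dim_space :: "'g::real_vector itself \<Rightarrow> bool" where
  "fin_dim_space _ \<longleftrightarrow> (\<exists>B::'g set. finite B \<and> span B = UNIV)"

definition lie_br_sub :: "('g::real_vector \<Rightarrow> 'g \<Rightarrow> 'g) \<Rightarrow> 'g set \<Rightarrow> 'g set \<Rightarrow> 'g set" where
  "lie_br_sub br V W = span {br x y | x y. x \<in> V \<and> y \<in> W}"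

definition direct_sum_decomp :: "(nat \<Rightarrow> 'g::real_vector set) \<Rightarrow> nat \<Rightarrow> bool" where
  "direct_sum_decomp V s \<longleftrightarrow>
     (\<forall>i\<in>{1..s}. subspace (V i)) \<and>
     (\<forall>x. \<exists>v. (\<forall>i\<in>{1..s}. v i \<in> V i) \<and> x = (\<Sum>i=1..s. v i)) \<and>
     (\<forall>v. (\<forall>i\<in>{1..s}. v i \<in> V i) \<and> (\<Sum>i=1..s. v i) = 0 \<longrightarrow> (\<forall>i\<in>{1..s}. v i = 0))"

definition stratification :: "('g::real_vector \<Rightarrow> 'g \<Rightarrow> 'g) \<Rightarrow> (nat \<Rightarrow> 'g set) \<Rightarrow> nat \<Rightarrow> bool" where
  "stratification br V s \<longleftrightarrow>
     s \<ge> 1 \<and> direct_sum_decomp V s \<and> V s \<noteq> {0} \<and>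
     (\<forall>j\<in>{1..s}. lie_br_sub br (V 1) (V j) = (if j = s then {0} else V (j+1)))"

definition lie_automorphism :: "('g::real_vector \<Rightarrow> 'g \<Rightarrow> 'g) \<Rightarrow> ('g \<Rightarrow> 'g) \<Rightarrow> bool" where
  "lie_automorphism br A \<longleftrightarrow> linear A \<and> bij A \<and> (\<forall>x y. A (br x y) = br (A x) (A y))"

end

theory Submission
  imports Defs
begin

text \<open>
  For a stratification \<open>V\<close> of length \<open>s\<close> put \<open>F a = V a \<oplus> V (a + 1) \<oplus> \<dots> \<oplus> V s\<close>.
  Since \<open>[V i, V j] \<subseteq> V (i + j)\<close>, \<open>F (k + 1)\<close> is the \<open>k\<close>-th term of the lower
  central series, so the filtration, and with it \<open>s\<close>, does not depend on the
  stratification. Given a second stratification \<open>W\<close>, let \<open>A = \<Sum>\<^sub>i \<pi>\<^sup>W\<^sub>i \<circ> \<pi>\<^sup>V\<^sub>i\<close>.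
  For \<open>x \<in> V i\<close> the vector \<open>x - A x\<close> lies in \<open>F (i + 1)\<close>; hence \<open>A\<close> is inverted by
  the map built in the same way with \<open>V\<close> and \<open>W\<close> exchanged, and for \<open>x \<in> V i\<close>,
  \<open>y \<in> V j\<close> the elements \<open>A [x, y]\<close> and \<open>[A x, A y]\<close> of \<open>W (i + j)\<close> agree modulo
  \<open>F (i + j + 1)\<close>, hence are equal.
\<close>

lemma linear_span_into_subspace:
  assumes "linear f" "subspace S" "f ` B \<subseteq> S" "x \<in> span B"
  shows "f x \<in> S"
  using assms span_linear_image[OF assms(1), of B] span_minimal by blast

locale lie_bracket =
  fixes br :: "'a::real_vector \<Rightarrow> 'a \<Rightarrow> 'a"
  assumes lie_algebra: "lie_algebra br"
begin

lemma linear_br_right: "linear (br x)"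
  using lie_algebra unfolding lie_algebra_def by blast

lemma linear_br_left: "linear (\<lambda>x. br x y)"
  using lie_algebra unfolding lie_algebra_def by blast

lemma br_self: "br x x = 0"
  using lie_algebra unfolding lie_algebra_def by blast

lemma jacobi: "br x (br y z) + br y (br z x) + br z (br x y) = 0"
  using lie_algebra unfolding lie_algebra_def by blast

lemmas br_add_left = linear_add[OF linear_br_left]
   and br_add_right = linear_add[OF linear_br_right]
   and br_diff_left = linear_diff[OF linear_br_left]
   and br_diff_right = linear_diff[OF linear_br_right]
   and br_zero_left = linear_0[OF linear_br_left]
   and br_zero_right = linear_0[OF linear_br_right]
   and br_minus_right = linear_neg[OF linear_br_right]

lemma br_anticomm: "br x y = - br y x"
proof -
  have "br (x + y) (x + y) = 0" by (rule br_self)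
  then have "br x x + br y x + (br x y + br y y) = 0" by (simp add: br_add_left br_add_right)
  then show ?thesis by (simp add: br_self add_eq_0_iff)
qed

lemma br_br_left: "br (br x y) z = br x (br y z) - br y (br x z)"
  using jacobi[of x y z] br_anticomm[of z x] br_anticomm[of z "br x y"]
  by (simp add: br_minus_right algebra_simps eq_neg_iff_add_eq_0)

end

fun lower_central_series :: "('a::real_vector \<Rightarrow> 'a \<Rightarrow> 'a) \<Rightarrow> nat \<Rightarrow> 'a set" where
  "lower_central_series br 0 = UNIV"
| "lower_central_series br (Suc k) = lie_br_sub br UNIV (lower_central_series br k)"

locale stratified_lie_algebra = lie_bracket br
  for br :: "'a::real_vector \<Rightarrow> 'a \<Rightarrow> 'a" +
  fixes V :: "nat \<Rightarrow> 'a set" and s :: nat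
  assumes stratification: "stratification br V s"
begin

lemma step_pos: "1 \<le> s"
  and direct_sum: "direct_sum_decomp V s"
  and top_nonzero: "V s \<noteq> {0}"
  and br_first: "j \<in> {1..s} \<Longrightarrow> lie_br_sub br (V 1) (V j) = (if j = s then {0} else V (j + 1))"
  using stratification unfolding stratification_def by blast+

lemma subspace_V: "i \<in> {1..s} \<Longrightarrow> subspace (V i)"
  using direct_sum unfolding direct_sum_decomp_def by blast

definition layer :: "nat \<Rightarrow> 'a set" where
  "layer k = (if k \<in> {1..s} then V k else {0})"

lemma subspace_layer: "subspace (layer k)"
  unfolding layer_def using subspace_V by (auto simp: subspace_def)

lemma layer_eq: "k \<in> {1..s} \<Longrightarrow> layer k = V k"
  unfolding layer_def by simp

lemma layer_eq_zero: "k \<notin> {1..s} \<Longrightarrow> x \<in> layer k \<Longrightarrow> x = 0"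
  unfolding layer_def by (auto split: if_splits)

lemma br_first_layer:
  assumes "x \<in> layer 1" "y \<in> layer j"
  shows "br x y \<in> layer (Suc j)"
proof (cases "j \<in> {1..s}")
  case True
  have "br x y \<in> lie_br_sub br (V 1) (V j)"
    using assms True step_pos unfolding lie_br_sub_def layer_def by (auto intro: span_base)
  then show ?thesis
    using br_first[OF True] True unfolding layer_def by (auto split: if_splits)
next
  case False
  then show ?thesis
    using assms layer_eq_zero br_zero_right subspace_0[OF subspace_layer] by metis
qed

lemma br_layer: "x \<in> layer i \<Longrightarrow> y \<in> layer j \<Longrightarrow> br x y \<in> layer (i + j)"
proof (induction i arbitrary: x y j rule: less_induct)
  case (less i)
  consider (outside) "i \<notin> {1..s}" | (first) "i = 1"
    | (later) i' where "i = Suc i'" "i' \<in> {1..s}" "i' \<noteq> s"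
    by (cases i) fastforce+
  then show ?case
  proof cases
    case outside
    then show ?thesis
      using less.prems layer_eq_zero br_zero_left subspace_0[OF subspace_layer] by metis
  next
    case first
    then show ?thesis using less.prems br_first_layer by simp
  next
    case later
    have "x \<in> span {br a b | a b. a \<in> layer 1 \<and> b \<in> layer i'}"
      using less.prems(1) br_first[OF later(2)] later step_pos
      unfolding layer_def lie_br_sub_def by (auto split: if_splits)
    then show ?thesis
    proof (rule linear_span_into_subspace[OF linear_br_left subspace_layer, rotated])
      show "(\<lambda>x. br x y) ` {br a b | a b. a \<in> layer 1 \<and> b \<in> layer i'} \<subseteq> layer (i + j)"
      proof clarify
        fix a b assume a: "a \<in> layer 1" and b: "b \<in> layer i'"
        have "br a (br b y) \<in> layer (Suc (i' + j))"
          using br_first_layer[OF a less.IH[OF _ b less.prems(2)]] later by simp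
        moreover have "br b (br a y) \<in> layer (i' + Suc j)"
          using less.IH[OF _ b br_first_layer[OF a less.prems(2)]] later by simp
        ultimately show "br (br a b) y \<in> layer (i + j)"
          using later br_br_left subspace_diff[OF subspace_layer] by simp
      qed
    qed
  qed
qed

definition components :: "'a \<Rightarrow> nat \<Rightarrow> 'a" where
  "components x = (SOME v. (\<forall>i\<in>{1..s}. v i \<in> V i) \<and> x = (\<Sum>i=1..s. v i))"

definition proj :: "nat \<Rightarrow> 'a \<Rightarrow> 'a" where
  "proj i x = (if i \<in> {1..s} then components x i else 0)"

lemma components_spec:
  "(\<forall>i\<in>{1..s}. components x i \<in> V i) \<and> x = (\<Sum>i=1..s. components x i)"
proof -
  obtain v where "(\<forall>i\<in>{1..s}. v i \<in> V i) \<and> x = (\<Sum>i=1..s. v i)"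
    using direct_sum unfolding direct_sum_decomp_def by blast
  then show ?thesis
    unfolding components_def
    by (rule someI[where P = "\<lambda>v. (\<forall>i\<in>{1..s}. v i \<in> V i) \<and> x = (\<Sum>i=1..s. v i)"])
qed

lemma proj_in_layer: "proj i x \<in> layer i"
  using components_spec[of x] unfolding proj_def layer_def by (cases "i \<in> {1..s}") auto

lemma proj_in_V: "i \<in> {1..s} \<Longrightarrow> proj i x \<in> V i"
  using proj_in_layer[of i x] by (simp add: layer_eq)

lemma proj_outside: "i \<notin> {1..s} \<Longrightarrow> proj i x = 0"
  unfolding proj_def by auto

lemma sum_proj: "(\<Sum>i=1..s. proj i x) = x"
  using components_spec[of x] unfolding proj_def by simp

lemma proj_unique:
  assumes "\<forall>i\<in>{1..s}. v i \<in> V i" and "(\<Sum>i=1..s. v i) = x" and "i \<in> {1..s}"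
  shows "proj i x = v i"
proof -
  have "\<forall>i\<in>{1..s}. v i - proj i x \<in> V i"
    using assms(1) proj_in_V subspace_diff[OF subspace_V] by blast
  moreover have "(\<Sum>i=1..s. v i - proj i x) = 0"
    using assms(2) sum_proj[of x] by (simp add: sum_subtractf)
  ultimately have "\<forall>i\<in>{1..s}. v i - proj i x = 0"
    using direct_sum unfolding direct_sum_decomp_def by (blast dest: spec[of _ "\<lambda>i. v i - proj i x"])
  then show ?thesis using assms(3) by simp
qed

lemma linear_proj: "linear (proj i)"
proof (cases "i \<in> {1..s}")
  case True
  show ?thesis
  proof (rule linearI)
    fix x y
    show "proj i (x + y) = proj i x + proj i y"
      by (rule proj_unique[OF _ _ True])
        (use proj_in_V subspace_add[OF subspace_V] sum_proj[of x] sum_proj[of y]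
          in \<open>auto simp: sum.distrib\<close>)
  next
    fix c :: real and x
    show "proj i (c *\<^sub>R x) = c *\<^sub>R proj i x"
      by (rule proj_unique[OF _ _ True])
        (use proj_in_V subspace_scale[OF subspace_V] sum_proj[of x]
          in \<open>auto simp: scaleR_sum_right[symmetric]\<close>)
  qed
qed (simp add: proj_outside linearI)

lemma proj_layer: "v \<in> layer k \<Longrightarrow> proj i v = (if i = k then v else 0)"
proof (cases "i \<in> {1..s}")
  case True
  assume v: "v \<in> layer k"
  show ?thesis
  proof (cases "k \<in> {1..s}")
    case True
    with v show ?thesis
      using proj_unique[OF _ _ \<open>i \<in> {1..s}\<close>, of "\<lambda>j. if j = k then v else 0"]
        subspace_0[OF subspace_V]
      unfolding layer_def by (auto simp: sum.delta)
  next
    case False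
    then show ?thesis using v layer_eq_zero linear_0[OF linear_proj] by auto
  qed
qed (use proj_outside layer_eq_zero in auto)

definition filtration :: "nat \<Rightarrow> 'a set" where
  "filtration a = span (\<Union>k\<in>{a..}. layer k)"

lemma subspace_filtration: "subspace (filtration a)"
  unfolding filtration_def by simp

lemma layer_subset_filtration: "a \<le> k \<Longrightarrow> layer k \<subseteq> filtration a"
  unfolding filtration_def by (auto intro: span_base)

lemma mem_filtration: "x \<in> filtration a \<longleftrightarrow> (\<forall>i<a. proj i x = 0)"
proof
  assume x: "x \<in> filtration a"
  show "\<forall>i<a. proj i x = 0"
  proof (intro allI impI)
    fix i assume "i < a"
    then have "proj i ` (\<Union>k\<in>{a..}. layer k) \<subseteq> {0}"
      by (auto simp: proj_layer)
    then show "proj i x = 0"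
      using linear_span_into_subspace[OF linear_proj subspace_single_0 _ x[unfolded filtration_def]]
      by simp
  qed
next
  assume low: "\<forall>i<a. proj i x = 0"
  have "(\<Sum>i=1..s. proj i x) \<in> filtration a"
  proof (rule subspace_sum[OF subspace_filtration])
    fix i
    show "proj i x \<in> filtration a"
    proof (cases "i < a")
      case False
      then show ?thesis using proj_in_layer layer_subset_filtration by (meson not_less subsetD)
    qed (simp add: low subspace_0[OF subspace_filtration])
  qed
  then show "x \<in> filtration a" using sum_proj[of x] by simp
qed

lemma filtration_UNIV: "a \<le> 1 \<Longrightarrow> filtration a = UNIV"
  by (auto simp: mem_filtration intro!: proj_outside)

lemma span_layers: "x \<in> span (\<Union>k. layer k)"
  using filtration_UNIV[of 0] unfolding filtration_def atLeast_0 by blast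

lemma filtration_trivial: "s < a \<Longrightarrow> filtration a = {0}"
proof -
  assume "s < a"
  then have "x = 0" if "x \<in> filtration a" for x
  proof -
    have "(\<Sum>i=1..s. proj i x) = 0"
      using that \<open>s < a\<close> by (intro sum.neutral) (auto simp: mem_filtration)
    then show ?thesis using sum_proj[of x] by simp
  qed
  then show "filtration a = {0}" using subspace_0[OF subspace_filtration] by blast
qed

lemma br_filtration:
  assumes x: "x \<in> filtration a" and y: "y \<in> filtration b"
  shows "br x y \<in> filtration (a + b)"
proof -
  have "br x' y' \<in> filtration (a + b)" if "x' \<in> layer i" "a \<le> i" "y' \<in> layer j" "b \<le> j"
    for x' y' i j
    using br_layer[OF that(1,3)] layer_subset_filtration[of "a + b" "i + j"] that(2,4) by auto
  then have "br x' y \<in> filtration (a + b)" if "x' \<in> layer i" "a \<le> i" for x' i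
    using that y unfolding filtration_def[of b]
    by (intro linear_span_into_subspace[OF linear_br_right subspace_filtration]) auto
  then show ?thesis
    using x unfolding filtration_def[of a]
    by (intro linear_span_into_subspace[OF linear_br_left subspace_filtration]) auto
qed

lemma filtration_diff_proj: "x \<in> filtration k \<Longrightarrow> x - proj k x \<in> filtration (Suc k)"
  by (auto simp: mem_filtration linear_diff[OF linear_proj] proj_layer[OF proj_in_layer] less_Suc_eq)

lemma filtration_Suc: "filtration (Suc (Suc k)) = lie_br_sub br UNIV (filtration (Suc k))"
proof
  show "filtration (Suc (Suc k)) \<subseteq> lie_br_sub br UNIV (filtration (Suc k))"
    unfolding filtration_def[of "Suc (Suc k)"]
  proof (rule span_minimal, clarify)
    fix i x assume i: "Suc (Suc k) \<le> i" and x: "x \<in> layer i"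
    show "x \<in> lie_br_sub br UNIV (filtration (Suc k))"
    proof (cases "i \<in> {1..s}")
      case True
      then have i': "i - 1 \<in> {1..s}" "i - 1 \<noteq> s" using i by auto
      then have "layer i = lie_br_sub br (V 1) (V (i - 1))"
        using br_first True i unfolding layer_def by (simp add: Suc_diff_Suc)
      also have "\<dots> \<subseteq> lie_br_sub br UNIV (filtration (Suc k))"
      proof -
        have "V (i - 1) \<subseteq> filtration (Suc k)"
          using layer_subset_filtration[of "Suc k" "i - 1"] i i' by (simp add: layer_eq)
        then show ?thesis unfolding lie_br_sub_def by (intro span_mono) blast
      qed
      finally show ?thesis using x by blast
    next
      case False
      then show ?thesis using layer_eq_zero[OF False x] by (simp add: lie_br_sub_def span_zero)
    qed
  qed (simp add: lie_br_sub_def)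
next
  show "lie_br_sub br UNIV (filtration (Suc k)) \<subseteq> filtration (Suc (Suc k))"
    unfolding lie_br_sub_def
    using br_filtration[of _ 1 _ "Suc k"] filtration_UNIV
    by (intro span_minimal[OF _ subspace_filtration]) auto
qed

lemma lower_central_series_eq_filtration: "lower_central_series br k = filtration (Suc k)"
  by (induction k) (simp_all add: filtration_UNIV filtration_Suc)

lemma lower_central_series_eq_0_iff: "lower_central_series br k = {0} \<longleftrightarrow> s \<le> k"
proof
  assume "lower_central_series br k = {0}"
  moreover have "V s \<subseteq> filtration (Suc k)" if "k < s"
    using layer_subset_filtration[of "Suc k" s] that step_pos unfolding layer_def by simp
  ultimately show "s \<le> k"
    using top_nonzero subspace_0[OF subspace_V[of s]] step_pos
    by (force simp: lower_central_series_eq_filtration)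
qed (simp add: lower_central_series_eq_filtration filtration_trivial)

end

lemma stratification_length_unique:
  assumes "lie_algebra br" "stratification br V s" "stratification br W t"
  shows "s = t"
proof -
  interpret V: stratified_lie_algebra br V s using assms(1,2) by unfold_locales
  interpret W: stratified_lie_algebra br W t using assms(1,3) by unfold_locales
  show ?thesis
    using V.lower_central_series_eq_0_iff W.lower_central_series_eq_0_iff by (metis order.refl le_antisym)
qed

definition regrade ::
    "(nat \<Rightarrow> 'a \<Rightarrow> 'a) \<Rightarrow> (nat \<Rightarrow> 'a \<Rightarrow> 'a) \<Rightarrow> nat \<Rightarrow> 'a \<Rightarrow> 'a::real_vector" where
  "regrade P Q s x = (\<Sum>i=1..s. Q i (P i x))"

lemma linear_regrade:
  assumes "\<And>i. linear (P i)" and "\<And>i. linear (Q i)"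
  shows "linear (regrade P Q s)"
  unfolding regrade_def
  by (rule linear_compose_sum) (use linear_compose[OF assms] in \<open>simp add: o_def\<close>)

locale two_stratifications = V: stratified_lie_algebra br V s + W: stratified_lie_algebra br W s
  for br :: "'a::real_vector \<Rightarrow> 'a \<Rightarrow> 'a" and V W s
begin

abbreviation A :: "'a \<Rightarrow> 'a" where "A \<equiv> regrade V.proj W.proj s"
abbreviation B :: "'a \<Rightarrow> 'a" where "B \<equiv> regrade W.proj V.proj s"

lemma filtration_eq: "V.filtration a = W.filtration a"
proof (cases a)
  case 0
  then show ?thesis by (simp add: V.filtration_UNIV W.filtration_UNIV)
next
  case (Suc k)
  then show ?thesis
    by (metis V.lower_central_series_eq_filtration W.lower_central_series_eq_filtration)
qed

lemma linear_A: "linear A"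
  by (intro linear_regrade V.linear_proj W.linear_proj)

lemma A_layer: "x \<in> V.layer k \<Longrightarrow> A x = W.proj k x"
  by (auto simp: regrade_def V.proj_layer if_distrib linear_0[OF W.linear_proj] W.proj_outside
      cong: if_cong)

lemma A_diff_filtration:
  assumes "x \<in> V.layer k"
  shows "x - A x \<in> W.filtration (Suc k)"
proof -
  have "x \<in> W.filtration k"
    using V.layer_subset_filtration[of k k] assms filtration_eq by auto
  then show ?thesis using W.filtration_diff_proj A_layer[OF assms] by simp
qed

lemma B_A: "B (A x) = x"
proof (rule linear_eq_on_span[OF _ linear_id[unfolded id_def] _ V.span_layers])
  interpret swapped: two_stratifications br W V s by unfold_locales
  show "linear (\<lambda>x. B (A x))"
    using linear_compose[OF linear_A swapped.linear_A] by (simp add: o_def)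
  fix x assume "x \<in> (\<Union>k. V.layer k)"
  then obtain k where x: "x \<in> V.layer k" by blast
  have "A x \<in> W.layer k" using A_layer[OF x] W.proj_in_layer by simp
  then have "B (A x) = V.proj k (A x)" by (rule swapped.A_layer)
  also have "\<dots> = V.proj k x - V.proj k (x - A x)"
    by (simp add: linear_diff[OF V.linear_proj])
  also have "V.proj k (x - A x) = 0"
    using A_diff_filtration[OF x] filtration_eq V.mem_filtration by auto
  finally show "B (A x) = x" using V.proj_layer[OF x] by simp
qed

lemma bij_A: "bij A"
proof -
  interpret swapped: two_stratifications br W V s by unfold_locales
  show ?thesis by (rule o_bij[of B]) (use B_A swapped.B_A in \<open>auto simp: o_def\<close>)
qed

lemma A_image:
  assumes k: "k \<in> {1..s}"
  shows "A ` V k = W k"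
proof
  interpret swapped: two_stratifications br W V s by unfold_locales
  show "A ` V k \<subseteq> W k"
  proof clarify
    fix x assume "x \<in> V k"
    then have "A x = W.proj k x" using A_layer V.layer_eq[OF k] by simp
    then show "A x \<in> W k" using W.proj_in_V[OF k] by simp
  qed
  show "W k \<subseteq> A ` V k"
  proof
    fix y assume "y \<in> W k"
    then have "B y = V.proj k y" using swapped.A_layer W.layer_eq[OF k] by simp
    then have "B y \<in> V k" using V.proj_in_V[OF k] by simp
    then show "y \<in> A ` V k" using swapped.B_A[of y] by (metis image_eqI)
  qed
qed

lemma A_br_layer:
  assumes x: "x \<in> V.layer i" and y: "y \<in> V.layer j"
  shows "A (br x y) = br (A x) (A y)"
proof -
  have Ax: "A x \<in> W.layer i" and Ay: "A y \<in> W.layer j"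
    using A_layer[OF x] A_layer[OF y] W.proj_in_layer by simp_all
  have y_filtration: "y \<in> W.filtration j"
    using V.layer_subset_filtration[of j j] y filtration_eq by auto
  have Ax_filtration: "A x \<in> W.filtration i"
    using W.layer_subset_filtration[of i i] Ax by auto
  have "br x y - br (A x) (A y) = br (x - A x) y + br (A x) (y - A y)"
    by (simp add: V.br_diff_left V.br_diff_right)
  also have "\<dots> \<in> W.filtration (Suc (i + j))"
    using W.br_filtration[OF A_diff_filtration[OF x] y_filtration]
      W.br_filtration[OF Ax_filtration A_diff_filtration[OF y]]
      subspace_add[OF W.subspace_filtration] by simp
  finally have "W.proj (i + j) (br x y) = W.proj (i + j) (br (A x) (A y))"
    by (simp add: W.mem_filtration linear_diff[OF W.linear_proj])
  moreover have "br x y \<in> V.layer (i + j)" using V.br_layer[OF x y] .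
  moreover have "br (A x) (A y) \<in> W.layer (i + j)" using W.br_layer[OF Ax Ay] .
  ultimately show ?thesis using A_layer W.proj_layer by simp
qed

lemma A_br: "A (br x y) = br (A x) (A y)"
proof (rule linear_eq_on_span[OF _ _ _ V.span_layers,
      where f = "\<lambda>x. A (br x y)" and g = "\<lambda>x. br (A x) (A y)"])
  show "linear (\<lambda>x. A (br x y))" "linear (\<lambda>x. br (A x) (A y))"
    using linear_compose[OF V.linear_br_left linear_A] linear_compose[OF linear_A V.linear_br_left]
    by (simp_all add: o_def)
  fix x assume "x \<in> (\<Union>k. V.layer k)"
  then obtain i where x: "x \<in> V.layer i" by blast
  show "A (br x y) = br (A x) (A y)"
  proof (rule linear_eq_on_span[OF _ _ _ V.span_layers,
        where f = "\<lambda>y. A (br x y)" and g = "\<lambda>y. br (A x) (A y)"])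
    show "linear (\<lambda>y. A (br x y))" "linear (\<lambda>y. br (A x) (A y))"
      using linear_compose[OF V.linear_br_right linear_A] linear_compose[OF linear_A V.linear_br_right]
      by (simp_all add: o_def)
    fix y assume "y \<in> (\<Union>k. V.layer k)"
    then obtain j where y: "y \<in> V.layer j" by blast
    show "A (br x y) = br (A x) (A y)" by (rule A_br_layer[OF x y])
  qed
qed

lemma lie_automorphism_A: "lie_automorphism br A"
  unfolding lie_automorphism_def using linear_A bij_A A_br by blast

end

theorem mainTheorem2:
  fixes br :: "'g::real_vector \<Rightarrow> 'g \<Rightarrow> 'g"
    and V W :: "nat \<Rightarrow> 'g set" and s t :: nat
  assumes "lie_algebra br"
    and "fin_dim_space TYPE('g)"
    and "stratification br V s"
    and "stratification br W t"
  shows "s = t \<and> (\<exists>A. lie_automorphism br A \<and> (\<forall>i\<in>{1..s}. A ` V i = W i))"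
proof -
  have "s = t" using assms(1,3,4) by (rule stratification_length_unique)
  interpret two_stratifications br V W s
    using assms(1,3,4) \<open>s = t\<close> by unfold_locales simp_all
  show ?thesis using \<open>s = t\<close> lie_automorphism_A A_image by blast
qed

end
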